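(* For all $\alpha\in(0,\pi/2)$ and $\beta\in[0,\alpha]$, the function $g(r)=\frac{1+Ar}{\sqrt{1+r^2+Br}}$ is concave at $r=r_0(\alpha,\beta)$, i.e. $g''(r_0(\alpha,\beta))\le 0$.
   Context: For $\alpha\in(0,\pi/2)$ and $\beta\in[0,\alpha]$, let $A=\frac{2\tan\beta}{\tan\alpha+\tan\beta}$, $B=2\cos(2\alpha)$, and $r_0(\alpha,\beta)=\frac{2A-B}{2-AB}$ (the critical point of $g$). *)

theory Defs
  imports "HOL-Analysis.Analysis"
begin

definition coefA :: "real \<Rightarrow> real \<Rightarrow> real" where
  "coefA \<alpha> \<beta> = 2 * tan \<beta> / (tan \<alpha> + tan \<beta>)"

definition coefB :: "real \<Rightarrow> real" where
  "coefB \<alpha> = 2 * cos (2 * \<alpha>)"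

definition r0 :: "real \<Rightarrow> real \<Rightarrow> real" where
  "r0 \<alpha> \<beta> = (2 * coefA \<alpha> \<beta> - coefB \<alpha>) / (2 - coefA \<alpha> \<beta> * coefB \<alpha>)"

definition gfun :: "real \<Rightarrow> real \<Rightarrow> real \<Rightarrow> real" where
  "gfun \<alpha> \<beta> r = (1 + coefA \<alpha> \<beta> * r) / sqrt (1 + r\<^sup>2 + coefB \<alpha> * r)"

end

theory Submission
  imports Defs
begin

text \<open>
  Write \<open>g(r) = (1 + A r) / \<surd>Q(r)\<close> with \<open>Q(r) = 1 + r\<^sup>2 + B r\<close>, which is positive
  because \<open>\<bar>B\<bar> < 2\<close>. Then \<open>g'(r) = N(r) / Q(r)\<^bsup>3/2\<^esup>\<close> with the affine numerator
  \<open>N(r) = (A - B/2) - r (1 - A B/2)\<close>, whose unique zero is \<open>r\<^sub>0\<close>. Since \<open>N(r\<^sub>0) = 0\<close>, only the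
  derivative of the numerator contributes at \<open>r\<^sub>0\<close>, so \<open>g''(r\<^sub>0) = -(1 - A B/2) / Q(r\<^sub>0)\<^bsup>3/2\<^esup>\<close>.
  This is nonpositive because \<open>0 \<le> A \<le> 1\<close> and \<open>\<bar>B\<bar> < 2\<close> give \<open>A B < 2\<close>.
\<close>

lemma DERIV_divide_numerator_zero:
  fixes f h :: "'a::real_normed_field \<Rightarrow> 'a"
  assumes "(f has_field_derivative f') (at x within s)"
    and "(h has_field_derivative h') (at x within s)"
    and "h x \<noteq> 0" and "f x = 0"
  shows "((\<lambda>x. f x / h x) has_field_derivative f' / h x) (at x within s)"
  using DERIV_divide[OF assms(1-3)] assms(3,4) by simp

lemma quadratic_pos:
  fixes b r :: real
  assumes "\<bar>b\<bar> < 2"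
  shows "0 < 1 + r\<^sup>2 + b * r"
proof -
  have "\<bar>b\<bar>\<^sup>2 < 2\<^sup>2"
    using assms by (intro power_strict_mono) auto
  then have "b\<^sup>2 < 4"
    by simp
  moreover have "0 \<le> (r + b / 2)\<^sup>2"
    by simp
  moreover have "1 + r\<^sup>2 + b * r = (r + b / 2)\<^sup>2 + (1 - b\<^sup>2 / 4)"
    by (simp add: power2_eq_square field_simps)
  ultimately show ?thesis
    by linarith
qed

lemma has_real_derivative_affine_div_sqrt_quadratic:
  fixes a b r :: real
  assumes "\<bar>b\<bar> < 2"
  shows "((\<lambda>r. (1 + a * r) / sqrt (1 + r\<^sup>2 + b * r)) has_real_derivative
           ((a - b / 2) - r * (1 - a * b / 2)) / ((1 + r\<^sup>2 + b * r) * sqrt (1 + r\<^sup>2 + b * r))) (at r)"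
proof -
  define S where "S = sqrt (1 + r\<^sup>2 + b * r)"
  have Q: "0 < 1 + r\<^sup>2 + b * r"
    using assms by (rule quadratic_pos)
  then have "0 < S" "S * S = 1 + r\<^sup>2 + b * r"
    by (simp_all add: S_def)
  have "((\<lambda>r. (1 + a * r) / sqrt (1 + r\<^sup>2 + b * r)) has_real_derivative
          (a * S - (1 + a * r) * ((2 * r + b) * (inverse S / 2))) / S\<^sup>2) (at r)"
    using Q unfolding S_def by (auto intro!: derivative_eq_intros simp: power2_eq_square)
  also have "(a * S - (1 + a * r) * ((2 * r + b) * (inverse S / 2))) / S\<^sup>2
      = (2 * a * (S * S) - (1 + a * r) * (2 * r + b)) / (2 * (S * S) * S)"
    using \<open>0 < S\<close> by (simp add: field_simps power2_eq_square)
  also have "\<dots> = (2 * ((a - b / 2) - r * (1 - a * b / 2))) / (2 * ((1 + r\<^sup>2 + b * r) * S))"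
    unfolding \<open>S * S = 1 + r\<^sup>2 + b * r\<close> by (simp add: algebra_simps power2_eq_square)
  also have "\<dots> = ((a - b / 2) - r * (1 - a * b / 2)) / ((1 + r\<^sup>2 + b * r) * S)"
    by (rule mult_divide_mult_cancel_left) simp
  finally show ?thesis
    by (simp only: S_def)
qed

lemma deriv2_affine_div_sqrt_quadratic_at_critical:
  fixes a b :: real
  assumes "\<bar>b\<bar> < 2" and "a * b \<noteq> 2"
  defines "r \<equiv> (2 * a - b) / (2 - a * b)"
  shows "deriv (deriv (\<lambda>r. (1 + a * r) / sqrt (1 + r\<^sup>2 + b * r))) r
           = - (1 - a * b / 2) / ((1 + r\<^sup>2 + b * r) * sqrt (1 + r\<^sup>2 + b * r))"
proof -
  have Q: "0 < 1 + r\<^sup>2 + b * r"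
    using assms(1) by (rule quadratic_pos)
  have "deriv (\<lambda>r. (1 + a * r) / sqrt (1 + r\<^sup>2 + b * r))
      = (\<lambda>r. ((a - b / 2) - r * (1 - a * b / 2)) / ((1 + r\<^sup>2 + b * r) * sqrt (1 + r\<^sup>2 + b * r)))"
    using has_real_derivative_affine_div_sqrt_quadratic[OF assms(1)] by (intro ext DERIV_imp_deriv)
  moreover have "(a - b / 2) - r * (1 - a * b / 2) = 0"
    using assms(2) by (simp add: r_def field_simps)
  then have "((\<lambda>r. ((a - b / 2) - r * (1 - a * b / 2)) / ((1 + r\<^sup>2 + b * r) * sqrt (1 + r\<^sup>2 + b * r)))
      has_real_derivative - (1 - a * b / 2) / ((1 + r\<^sup>2 + b * r) * sqrt (1 + r\<^sup>2 + b * r))) (at r)"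
    using Q by (intro DERIV_divide_numerator_zero) (auto intro!: derivative_eq_intros)
  ultimately show ?thesis
    by (simp add: DERIV_imp_deriv)
qed

lemma coefA_nonneg:
  assumes "0 \<le> \<beta>" and "\<beta> \<le> \<alpha>" and "\<alpha> < pi / 2"
  shows "0 \<le> coefA \<alpha> \<beta>"
proof -
  have "0 \<le> tan \<beta>" "tan \<beta> \<le> tan \<alpha>"
    using tan_mono_le[of 0 \<beta>] tan_mono_le[of \<beta> \<alpha>] assms by auto
  then show ?thesis
    by (simp add: coefA_def)
qed

lemma coefA_le_one:
  assumes "0 \<le> \<beta>" and "\<beta> \<le> \<alpha>" and "\<alpha> < pi / 2"
  shows "coefA \<alpha> \<beta> \<le> 1"
proof -
  have "0 \<le> tan \<beta>" "tan \<beta> \<le> tan \<alpha>"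
    using tan_mono_le[of 0 \<beta>] tan_mono_le[of \<beta> \<alpha>] assms by auto
  then show ?thesis
    by (cases "tan \<alpha> + tan \<beta> = 0") (simp_all add: coefA_def divide_le_eq)
qed

lemma abs_coefB_less_2:
  assumes "0 < \<alpha>" and "\<alpha> < pi / 2"
  shows "\<bar>coefB \<alpha>\<bar> < 2"
proof -
  have "cos (2 * \<alpha>) < 1" "-1 < cos (2 * \<alpha>)"
    using cos_monotone_0_pi[of 0 "2 * \<alpha>"] cos_monotone_0_pi[of "2 * \<alpha>" pi] assms by auto
  then show ?thesis
    by (simp add: coefB_def)
qed

lemma coefA_mult_coefB_less_2:
  assumes "0 < \<alpha>" and "\<alpha> < pi / 2" and "0 \<le> \<beta>" and "\<beta> \<le> \<alpha>"
  shows "coefA \<alpha> \<beta> * coefB \<alpha> < 2"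
proof -
  have "coefA \<alpha> \<beta> * coefB \<alpha> \<le> coefA \<alpha> \<beta> * \<bar>coefB \<alpha>\<bar>"
    using coefA_nonneg assms(2-4) by (intro mult_left_mono) auto
  also have "\<dots> \<le> \<bar>coefB \<alpha>\<bar>"
    using coefA_nonneg coefA_le_one assms(2-4) by (intro mult_left_le_one_le) auto
  also have "\<dots> < 2"
    using assms(1,2) by (rule abs_coefB_less_2)
  finally show ?thesis .
qed

theorem lemma7:
  fixes \<alpha> \<beta> :: real
  assumes "0 < \<alpha>" and "\<alpha> < pi / 2" and "0 \<le> \<beta>" and "\<beta> \<le> \<alpha>"
  shows "deriv (deriv (gfun \<alpha> \<beta>)) (r0 \<alpha> \<beta>) \<le> 0"
proof -
  define a b where "a = coefA \<alpha> \<beta>" and "b = coefB \<alpha>"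
  have b: "\<bar>b\<bar> < 2"
    unfolding b_def using assms(1,2) by (rule abs_coefB_less_2)
  have ab: "a * b < 2"
    unfolding a_def b_def using assms by (rule coefA_mult_coefB_less_2)
  define r where "r = (2 * a - b) / (2 - a * b)"
  have "gfun \<alpha> \<beta> = (\<lambda>r. (1 + a * r) / sqrt (1 + r\<^sup>2 + b * r))" and "r0 \<alpha> \<beta> = r"
    by (simp_all add: fun_eq_iff gfun_def r0_def a_def b_def r_def)
  then have "deriv (deriv (gfun \<alpha> \<beta>)) (r0 \<alpha> \<beta>)
      = - (1 - a * b / 2) / ((1 + r\<^sup>2 + b * r) * sqrt (1 + r\<^sup>2 + b * r))"
    using deriv2_affine_div_sqrt_quadratic_at_critical[OF b] ab by (simp add: r_def)
  also have "\<dots> \<le> 0"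
    using quadratic_pos[OF b, of r] ab by (intro divide_nonpos_pos) auto
  finally show ?thesis .
qed

end
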